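(* Let $\mu\in\mathbb F_q\setminus\{0\}$. If $g$ is a generator of $\mathcal W_0$ such that $g\cap\Delta$ is an $(n-2)$-space, then $g\cap\mathcal Q_\mu$ is a cone whose vertex is an $(n-3)$-space (empty if $n=2$) and whose base is a non-degenerate conic.
   Context: Let $q$ be an even prime power and $n\ge 2$ an integer. Let $\mathrm{PG}(2n+1,q)$ have homogeneous coordinates $(X_1,\dots,X_{2n+2})$. Fix $\delta\in\mathbb F_q$ such that $X^2+X+\delta$ is irreducible over $\mathbb F_q$. For $\mu\in\mathbb F_q$ let $\mathcal Q_\mu$ be the quadric $X_1^2+X_1X_{2n+2}+\delta X_{2n+2}^2+\sum_{i=2}^{n+1}X_iX_{2n+3-i}+\mu(X_{2n}^2+X_{2n}X_{2n+1}+\delta X_{2n+1}^2)=0$ (an elliptic quadric $\mathcal Q^-(2n+1,q)$), and $\perp_\mu$ the symplectic polarity defined by the alternating form $B_\mu(X,Y)=\sum_{i=1}^{2n+2}X_iY_{2n+3-i}+\mu(X_{2n}Y_{2n+1}+X_{2n+1}Y_{2n})$ (the polarity associated with $\mathcal Q_\mu$). Let $\mathcal W_\mu$ be the associated symplectic polar space; its generators are the totally isotropic $n$-spaces. Let $\Delta$ be the $(2n-1)$-space $X_{2n}=X_{2n+1}=0$. A $(-1)$-space is the empty set. *)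

theory Defs
  imports Main "HOL-Library.Function_Algebras" "HOL-Computational_Algebra.Polynomial"
begin

text \<open>Vectors of F_q^(2n+2) are modelled as functions nat => 'a supported on {1..2n+2}
  (coordinate X_i is v i). A projective k-space is a vector subspace of dimension k+1;
  a point set of PG(2n+1,q) is modelled by the corresponding set of vectors (including 0).\<close>

definition smul :: "'a::field \<Rightarrow> (nat \<Rightarrow> 'a) \<Rightarrow> (nat \<Rightarrow> 'a)" where
  "smul c v = (\<lambda>i. c * v i)"

lemma vector_space_smul: "vector_space (smul :: 'a::field \<Rightarrow> _)"
  by unfold_locales (simp_all add: smul_def fun_eq_iff algebra_simps)

definition ambient :: "nat \<Rightarrow> (nat \<Rightarrow> 'a::field) set" where
  "ambient n = {v. \<forall>i. i \<notin> {1..2*n+2} \<longrightarrow> v i = 0}"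

definition is_space :: "nat \<Rightarrow> nat \<Rightarrow> (nat \<Rightarrow> 'a::field) set \<Rightarrow> bool" where
  "is_space n d S \<longleftrightarrow> S \<subseteq> ambient n \<and> module.subspace smul S \<and> vector_space.dim smul S = d"

definition Qmu :: "nat \<Rightarrow> 'a::field \<Rightarrow> 'a \<Rightarrow> (nat \<Rightarrow> 'a) \<Rightarrow> 'a" where
  "Qmu n \<delta> \<mu> X = X 1 ^ 2 + X 1 * X (2*n+2) + \<delta> * X (2*n+2) ^ 2
     + (\<Sum>i=2..n+1. X i * X (2*n+3-i))
     + \<mu> * (X (2*n) ^ 2 + X (2*n) * X (2*n+1) + \<delta> * X (2*n+1) ^ 2)"

definition Bmu :: "nat \<Rightarrow> 'a::field \<Rightarrow> (nat \<Rightarrow> 'a) \<Rightarrow> (nat \<Rightarrow> 'a) \<Rightarrow> 'a" where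
  "Bmu n \<mu> X Y = (\<Sum>i=1..2*n+2. X i * Y (2*n+3-i))
     + \<mu> * (X (2*n) * Y (2*n+1) + X (2*n+1) * Y (2*n))"

definition generator :: "nat \<Rightarrow> 'a::field \<Rightarrow> (nat \<Rightarrow> 'a) set \<Rightarrow> bool" where
  "generator n \<mu> g \<longleftrightarrow> is_space n (n+1) g \<and> (\<forall>v\<in>g. \<forall>w\<in>g. Bmu n \<mu> v w = 0)"

definition Delta :: "nat \<Rightarrow> (nat \<Rightarrow> 'a::field) set" where
  "Delta n = {v \<in> ambient n. v (2*n) = 0 \<and> v (2*n+1) = 0}"

text \<open>The point set of g on Q_mu is a cone with vertex K (projective (dim K - 1)-space)
  and base the conic pi \<inter> Q_mu, where pi is a plane of g skew to K spanning g with K,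
  and the conic is non-degenerate: the quadratic form Q_mu restricted to pi has no
  nonzero singular vector (Q(v)=0 and v in the radical of the polar form B_mu on pi).\<close>
definition cone_over_nondeg_conic ::
    "nat \<Rightarrow> 'a::field \<Rightarrow> 'a \<Rightarrow> (nat \<Rightarrow> 'a) set \<Rightarrow> (nat \<Rightarrow> 'a) set \<Rightarrow> bool" where
  "cone_over_nondeg_conic n \<delta> \<mu> g K \<longleftrightarrow>
     (\<exists>P. is_space n 3 P \<and> K \<subseteq> g \<and> P \<subseteq> g \<and> K \<inter> P = {0}
        \<and> g = {k + p | k p. k \<in> K \<and> p \<in> P}
        \<and> {v \<in> g. Qmu n \<delta> \<mu> v = 0} = {k + p | k p. k \<in> K \<and> p \<in> P \<and> Qmu n \<delta> \<mu> p = 0}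
        \<and> (\<forall>p\<in>P. Qmu n \<delta> \<mu> p = 0 \<and> (\<forall>p'\<in>P. Bmu n \<mu> p p' = 0) \<longrightarrow> p = 0))"

end

theory Submission
  imports Defs
begin

text \<open>Since g is totally isotropic for B_0 and q is even, Q_0 is additive on g with
  Q_0(cv) = c^2 Q_0(v), and every element of F_q is a square; hence the singular vectors K of
  Q_0 in D = g \<inter> \<Delta> form a subspace of codimension at most one in D. The codimension is one:
  g contains u, w with (X_2n, X_2n+1) equal to (1,0) and (0,1), B_0-orthogonality to them kills
  the coordinates X_2, X_3 on D, and a totally singular D would then be an (n-1)-dimensional
  totally singular subspace of a form of Witt index n-2. For a non-singular d_0 in D we get
  g = K \<oplus> \<langle>d_0, u, w\<rangle>; the vectors of K are Q_\<mu>-singular and B_\<mu>-orthogonal to g, and on the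
  plane \<langle>d_0, u, w\<rangle> the extra term \<mu>(X_2n Y_2n+1 + X_2n+1 Y_2n) of B_\<mu> makes the restricted
  form non-degenerate.\<close>

interpretation V: vector_space "smul :: 'a::field \<Rightarrow> (nat \<Rightarrow> 'a) \<Rightarrow> (nat \<Rightarrow> 'a)"
  by (rule vector_space_smul)

interpretation VP: vector_space_pair "smul :: 'a::field \<Rightarrow> (nat \<Rightarrow> 'a) \<Rightarrow> (nat \<Rightarrow> 'a)"
  "smul :: 'a::field \<Rightarrow> (nat \<Rightarrow> 'a) \<Rightarrow> (nat \<Rightarrow> 'a)"
  by unfold_locales

lemma smul_apply: "smul c v i = c * v i"
  by (simp add: smul_def)

lemma CHAR_2_add_self:
  assumes "CHAR('a::ring_1) = 2" shows "(x::'a) + x = 0"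
  using uminus_CHAR_2[OF assms, of x] by (metis add.right_inverse)

lemma CHAR_2_power2_add:
  assumes "CHAR('a::comm_ring_1) = 2" shows "((x::'a) + y)^2 = x^2 + y^2"
  using CHAR_2_add_self[OF assms, of "x * y"] by (simp add: power2_sum mult_2 ac_simps)

lemma CHAR_2_exists_sqrt:
  assumes "CHAR('a::{finite,field}) = 2" shows "\<exists>c::'a. c^2 = a"
proof -
  have "inj (\<lambda>c::'a. c^2)"
  proof (rule injI)
    fix x y :: 'a assume "x^2 = y^2"
    then have "(x + y)^2 = 0" using CHAR_2_power2_add[OF assms, of x y] CHAR_2_add_self[OF assms] by simp
    then show "x = y" using minus_CHAR_2[OF assms, of x y] by simp
  qed
  then have "surj (\<lambda>c::'a. c^2)" by (rule finite_UNIV_inj_surj[OF finite_UNIV])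
  then show ?thesis by (metis surjD)
qed

lemma irreducible_quadratic_anisotropic:
  fixes \<delta> x y :: "'a::field"
  assumes irr: "irreducible [:\<delta>, 1, 1:]" and zero: "x^2 + x*y + \<delta>*y^2 = 0"
  shows "x = 0 \<and> y = 0"
proof (rule ccontr)
  assume "\<not> (x = 0 \<and> y = 0)"
  with zero have "y \<noteq> 0" by auto
  then have "poly [:\<delta>, 1, 1:] (x / y) = 0"
    using zero by (simp add: field_simps power2_eq_square)
  then obtain q where q: "[:\<delta>, 1, 1:] = [:-(x / y), 1:] * q"
    using poly_eq_0_iff_dvd by blast
  then have q0: "q \<noteq> 0" by auto
  then have "degree [:\<delta>, 1, 1:] = 1 + degree q"
    unfolding q by (subst degree_mult_eq) simp_all
  then have "degree q = 1" by simp
  moreover have "is_unit [:-(x / y), 1:] \<or> is_unit q"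
    using irreducibleD[OF irr q] .
  ultimately show False using q0 by (auto simp: is_unit_iff_degree)
qed

lemma finite_ambient: "finite (ambient n :: (nat \<Rightarrow> 'a::{finite,field}) set)"
proof (rule finite_subset)
  show "ambient n \<subseteq> {f :: nat \<Rightarrow> 'a. \<forall>x. x \<notin> {1..2*n+2} \<longrightarrow> f x = 0}"
    by (auto simp: ambient_def)
  show "finite \<dots>" using finite_set_of_finite_funs[of "{1..2*n+2}" "UNIV::'a set" 0] by simp
qed

lemma linear_smulI:
  assumes "\<And>x y. f (x + y) = f x + f y" "\<And>c x. f (smul c x) = smul c (f x)"
  shows "Vector_Spaces.linear smul smul (f :: (nat \<Rightarrow> 'a::field) \<Rightarrow> (nat \<Rightarrow> 'a))"
  using assms vector_space_smul by (simp add: Vector_Spaces.linear_iff)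

lemma subspace_coord_zero:
  "V.subspace S \<Longrightarrow> V.subspace {s \<in> S. s j = 0}"
  unfolding V.subspace_def by (auto simp: smul_apply)

lemma dim_le_dim_coord_zero:
  fixes S :: "(nat \<Rightarrow> 'a::field) set"
  assumes sub: "V.subspace S" and fin: "finite S"
  shows "V.dim S \<le> V.dim {s \<in> S. s j = 0} + 1"
proof (cases "\<forall>s\<in>S. s j = 0")
  case True
  then have "{s \<in> S. s j = 0} = S" by auto
  then show ?thesis by simp
next
  case False
  then obtain s0 where s0: "s0 \<in> S" "s0 j \<noteq> 0" by auto
  obtain B where B: "B \<subseteq> {s \<in> S. s j = 0}" "V.independent B" "{s \<in> S. s j = 0} \<subseteq> V.span B"
     "card B = V.dim {s \<in> S. s j = 0}"
    using V.basis_exists by blast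
  have finB: "finite B" using B(1) fin by (auto intro: finite_subset)
  have "S \<subseteq> V.span (insert s0 B)"
  proof
    fix s assume s: "s \<in> S"
    have "s - smul (s j / s0 j) s0 \<in> {s \<in> S. s j = 0}"
      using sub s s0 by (simp add: V.subspace_diff V.subspace_scale smul_apply)
    then show "s \<in> V.span (insert s0 B)" using B(3) V.span_breakdown_eq by blast
  qed
  then have "V.dim S \<le> card (insert s0 B)" using finB by (simp add: V.dim_le_card)
  also have "\<dots> \<le> card B + 1" using finB by (simp add: card_insert_if)
  finally show ?thesis using B(4) by simp
qed

lemma dim_image_inj_on:
  fixes S :: "(nat \<Rightarrow> 'a::field) set"
  assumes lin: "Vector_Spaces.linear smul smul f" and sub: "V.subspace S" and inj: "inj_on f S"
  shows "V.dim (f ` S) = V.dim S"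
proof -
  obtain B where B: "B \<subseteq> S" "V.independent B" "S \<subseteq> V.span B" "card B = V.dim S"
    using V.basis_exists[of S] by auto
  have spB: "V.span B = S"
    using B V.span_minimal[OF B(1) sub] by auto
  have "V.independent (f ` B)"
    using VP.linear_independent_injective_image[OF lin B(2)] inj spB by simp
  moreover have "card (f ` B) = card B"
    using card_image inj_on_subset[OF inj B(1)] by blast
  moreover have "V.span (f ` B) = f ` S" using VP.linear_span_image[OF lin, of B] spB by simp
  ultimately show ?thesis
    using B(4) by (metis V.dim_eq_card_independent V.dim_span)
qed

lemma in_span_insert_iff:
  "x \<in> V.span (insert a S) \<longleftrightarrow> (\<exists>c y. y \<in> V.span S \<and> x = smul c a + y)"
  unfolding V.span_breakdown_eq
proof
  assume "\<exists>k. x - smul k a \<in> V.span S"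
  then obtain k where "x - smul k a \<in> V.span S" ..
  then show "\<exists>c y. y \<in> V.span S \<and> x = smul c a + y"
    by (intro exI[of _ k] exI[of _ "x - smul k a"]) simp
qed (metis add_diff_cancel_left')

lemma in_span_3_iff:
  "x \<in> V.span {d, u, w} \<longleftrightarrow> (\<exists>c a b. x = smul c d + smul a u + smul b w)"
  by (auto simp: in_span_insert_iff V.span_singleton add.assoc)

definition clear_coords :: "nat set \<Rightarrow> (nat \<Rightarrow> 'a::zero) \<Rightarrow> nat \<Rightarrow> 'a" where
  "clear_coords J v = (\<lambda>i. if i \<in> J then 0 else v i)"

lemma linear_clear_coords: "Vector_Spaces.linear smul smul (clear_coords J :: (nat \<Rightarrow> 'a::field) \<Rightarrow> _)"
  by (rule linear_smulI) (auto simp: clear_coords_def fun_eq_iff smul_apply)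

lemma Qmu_smul: "Qmu n \<delta> \<mu> (smul c v) = c^2 * Qmu n \<delta> \<mu> v"
  by (simp add: Qmu_def sum_distrib_left power2_eq_square algebra_simps smul_apply)

lemma Qmu_zero [simp]: "Qmu n \<delta> \<mu> 0 = 0"
  by (simp add: Qmu_def)

lemma Qmu_eq_Q0: "v (2*n) = 0 \<Longrightarrow> v (2*n+1) = 0 \<Longrightarrow> Qmu n \<delta> \<mu> v = Qmu n \<delta> 0 v"
  by (simp add: Qmu_def)

lemma Bmu_eq_B0: "Bmu n \<mu> v w = Bmu n 0 v w + \<mu> * (v (2*n) * w (2*n+1) + v (2*n+1) * w (2*n))"
  by (simp add: Bmu_def)

lemma sum_reflect_halves:
  "(\<Sum>i=1..2*n+2. (f::nat \<Rightarrow> 'a::comm_monoid_add) i) = (\<Sum>i=1..n+1. f i + f (2*n+3-i))"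
proof -
  have "{1..2*n+2} = {1..n+1} \<union> {n+2..2*n+2}" by auto
  then have "(\<Sum>i=1..2*n+2. f i) = (\<Sum>i=1..n+1. f i) + (\<Sum>i=n+2..2*n+2. f i)"
    by (simp add: sum.union_disjoint)
  also have "(\<Sum>i=n+2..2*n+2. f i) = (\<Sum>i=1..n+1. f (2*n+3-i))"
    by (rule sum.reindex_bij_witness[where i="\<lambda>i. 2*n+3-i" and j="\<lambda>i. 2*n+3-i"]) auto
  finally show ?thesis by (simp add: sum.distrib)
qed

lemma Qmu_add:
  fixes v w :: "nat \<Rightarrow> 'a::field"
  assumes "CHAR('a) = 2"
  shows "Qmu n \<delta> \<mu> (v + w) = Qmu n \<delta> \<mu> v + Qmu n \<delta> \<mu> w + Bmu n \<mu> v w"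
proof -
  define H where "H x = (\<Sum>i=2..n+1. x i * x (2*n+3-i))" for x :: "nat \<Rightarrow> 'a"
  define cross where "cross = (\<Sum>i=2..n+1. v i * w (2*n+3-i) + v (2*n+3-i) * w i)"
  have Q: "Qmu n \<delta> \<mu> x = x 1 ^ 2 + x 1 * x (2*n+2) + \<delta> * x (2*n+2) ^ 2 + H x
      + \<mu> * (x (2*n) ^ 2 + x (2*n) * x (2*n+1) + \<delta> * x (2*n+1) ^ 2)" for x
    unfolding Qmu_def H_def ..
  have H: "H (v + w) = H v + H w + cross"
    unfolding H_def cross_def sum.distrib[symmetric] by (rule sum.cong) (simp_all add: algebra_simps)
  have "{1..n+1} = insert 1 {2..n+1}" by auto
  then have B: "Bmu n \<mu> v w = v 1 * w (2*n+2) + v (2*n+2) * w 1 + cross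
      + \<mu> * (v (2*n) * w (2*n+1) + v (2*n+1) * w (2*n))"
    unfolding Bmu_def sum_reflect_halves cross_def by simp
  show ?thesis
    unfolding Q[of "v + w"] Q[of v] Q[of w] H B plus_fun_apply CHAR_2_power2_add[OF assms]
    by (simp add: algebra_simps)
qed

definition pair_coords :: "nat \<Rightarrow> nat set \<Rightarrow> nat set" where
  "pair_coords n P = {1, 2*n+2} \<union> P \<union> (\<lambda>i. 2*n+3-i) ` P"

definition pair_form :: "nat \<Rightarrow> 'a::field \<Rightarrow> nat set \<Rightarrow> (nat \<Rightarrow> 'a) \<Rightarrow> 'a" where
  "pair_form n \<delta> P v = v 1 ^ 2 + v 1 * v (2*n+2) + \<delta> * v (2*n+2) ^ 2 + (\<Sum>i\<in>P. v i * v (2*n+3-i))"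

lemma pair_form_insert:
  "finite P \<Longrightarrow> i \<notin> P \<Longrightarrow> pair_form n \<delta> (insert i P) v = pair_form n \<delta> P v + v i * v (2*n+3-i)"
  by (simp add: pair_form_def algebra_simps)

lemma pair_form_cong:
  assumes "p \<notin> pair_coords n P" and "\<And>j. j \<noteq> p \<Longrightarrow> v j = w j"
  shows "pair_form n \<delta> P v = pair_form n \<delta> P w"
proof -
  have "v i * v (2*n+3-i) = w i * w (2*n+3-i)" if "i \<in> P" for i
  proof -
    have "i \<noteq> p" "2*n+3-i \<noteq> p" using assms(1) that by (auto simp: pair_coords_def)
    then show ?thesis using assms(2) by simp
  qed
  then have "(\<Sum>i\<in>P. v i * v (2*n+3-i)) = (\<Sum>i\<in>P. w i * w (2*n+3-i))"
    by (rule sum.cong[OF refl])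
  moreover have "v 1 = w 1" "v (2*n+2) = w (2*n+2)"
    using assms by (auto simp: pair_coords_def)
  ultimately show ?thesis unfolding pair_form_def by simp
qed

lemma pair_coords_insert:
  "pair_coords n (insert i P) = insert i (insert (2*n+3-i) (pair_coords n P))"
  by (auto simp: pair_coords_def)

lemma partner_notin_pair_coords:
  assumes "i \<in> {2..n+1}" "i \<notin> P" "P \<subseteq> {2..n+1}"
  shows "2*n+3-i \<notin> pair_coords n P"
proof -
  have "2*n+3-i \<notin> P" using assms(1,3) by fastforce
  moreover have "2*n+3-i \<notin> (\<lambda>j. 2*n+3-j) ` P"
  proof
    assume "2*n+3-i \<in> (\<lambda>j. 2*n+3-j) ` P"
    then obtain j where j: "j \<in> P" "2*n+3-i = 2*n+3-j" by blast
    then have "j = i" using assms(1,3) by auto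
    with j(1) assms(2) show False by simp
  qed
  ultimately show ?thesis using assms(1) by (auto simp: pair_coords_def)
qed

lemma inj_on_clear_partner:
  fixes S :: "(nat \<Rightarrow> 'a::field) set"
  assumes sub: "V.subspace S" and singular: "\<forall>s\<in>S. pair_form n \<delta> (insert i P) s = 0"
    and P: "finite P" "i \<notin> P" and partner: "2*n+3-i \<notin> pair_coords n P"
    and s0: "s0 \<in> S" "s0 i \<noteq> 0"
  shows "inj_on (clear_coords {2*n+3-i}) {s \<in> S. s i = 0}"
proof -
  define p where "p = 2*n+3-i"
  have "x = 0" if x: "x \<in> S" "x i = 0" "clear_coords {p} x = 0" for x
  proof -
    have x_off_p: "x j = 0" if "j \<noteq> p" for j
      using fun_cong[OF x(3), of j] that by (simp add: clear_coords_def)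
    have "x + s0 \<in> S" using x(1) s0(1) sub by (simp add: V.subspace_add)
    then have "pair_form n \<delta> (insert i P) (x + s0) = 0" using singular by blast
    moreover have "pair_form n \<delta> P (x + s0) = pair_form n \<delta> P s0"
      using partner x_off_p by (intro pair_form_cong) (auto simp: p_def)
    ultimately have "pair_form n \<delta> P s0 + s0 i * (x p + s0 p) = 0"
      using x(2) by (simp add: pair_form_insert[OF P] p_def)
    moreover have "pair_form n \<delta> P s0 + s0 i * s0 p = 0"
      using singular s0(1) by (simp add: pair_form_insert[OF P] p_def)
    moreover have "s0 i * x p = (pair_form n \<delta> P s0 + s0 i * (x p + s0 p))
        - (pair_form n \<delta> P s0 + s0 i * s0 p)"
      by (simp add: algebra_simps)
    ultimately have "s0 i * x p = 0" by simp
    then have "x p = 0" using s0(2) by simp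
    then have "x j = 0" for j using x_off_p by (cases "j = p") auto
    then show "x = 0" by (simp add: fun_eq_iff)
  qed
  then show ?thesis
    unfolding p_def[symmetric]
    using VP.linear_inj_on_iff_eq_0[OF linear_clear_coords subspace_coord_zero[OF sub]] by blast
qed

lemma remove_hyperbolic_pair:
  fixes S :: "(nat \<Rightarrow> 'a::field) set"
  assumes P: "finite P" "i \<notin> P" "i \<in> {2..n+1}" "P \<subseteq> {2..n+1}"
    and S: "V.subspace S" "finite S"
    and support: "\<forall>s\<in>S. \<forall>j. j \<notin> pair_coords n (insert i P) \<longrightarrow> s j = 0"
    and singular: "\<forall>s\<in>S. pair_form n \<delta> (insert i P) s = 0"
  obtains S' where "V.subspace S'" "finite S'" "\<forall>s\<in>S'. \<forall>j. j \<notin> pair_coords n P \<longrightarrow> s j = 0"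
    "\<forall>s\<in>S'. pair_form n \<delta> P s = 0" "V.dim S \<le> V.dim S' + 1"
proof -
  define p where "p = 2*n+3-i"
  have partner: "p \<notin> pair_coords n P"
    unfolding p_def using P(3,2,4) by (rule partner_notin_pair_coords)
  have support': "s j = 0" if "s \<in> S" "j \<notin> pair_coords n P" "j \<noteq> i" "j \<noteq> p" for s j
    using support that unfolding pair_coords_insert p_def by blast
  have singular': "pair_form n \<delta> P s + s i * s p = 0" if "s \<in> S" for s
    using singular that by (simp add: pair_form_insert[OF P(1,2)] p_def)
  show ?thesis
  proof (cases "\<forall>s\<in>S. s i = 0")
    case True
    define S1 where "S1 = {s \<in> S. s p = 0}"
    show ?thesis
    proof (rule that)
      show "V.subspace S1" unfolding S1_def by (rule subspace_coord_zero[OF S(1)])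
      show "finite S1" using S(2) by (simp add: S1_def)
      show "\<forall>s\<in>S1. \<forall>j. j \<notin> pair_coords n P \<longrightarrow> s j = 0"
        using True support' by (auto simp: S1_def)
      show "\<forall>s\<in>S1. pair_form n \<delta> P s = 0"
        using singular' by (auto simp: S1_def) (metis add_0_right mult_zero_right)
      show "V.dim S \<le> V.dim S1 + 1"
        unfolding S1_def using S by (rule dim_le_dim_coord_zero)
    qed
  next
    case False
    then obtain s0 where s0: "s0 \<in> S" "s0 i \<noteq> 0" by auto
    define S0 where "S0 = {s \<in> S. s i = 0}"
    define \<zeta> :: "(nat \<Rightarrow> 'a) \<Rightarrow> nat \<Rightarrow> 'a" where "\<zeta> = clear_coords {p}"
    have S0: "V.subspace S0" unfolding S0_def by (rule subspace_coord_zero[OF S(1)])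
    show ?thesis
    proof (rule that)
      show "V.subspace (\<zeta> ` S0)"
        unfolding \<zeta>_def by (rule VP.linear_subspace_image[OF linear_clear_coords S0])
      show "finite (\<zeta> ` S0)" using S(2) by (simp add: S0_def)
      show "\<forall>s\<in>\<zeta> ` S0. \<forall>j. j \<notin> pair_coords n P \<longrightarrow> s j = 0"
        using support' by (auto simp: S0_def \<zeta>_def clear_coords_def)
      have "pair_form n \<delta> P (\<zeta> s) = pair_form n \<delta> P s" for s
        using partner by (intro pair_form_cong) (auto simp: \<zeta>_def clear_coords_def)
      then show "\<forall>s\<in>\<zeta> ` S0. pair_form n \<delta> P s = 0"
        using singular' by (auto simp: S0_def) (metis add_0_right mult_zero_left)
      have "inj_on \<zeta> S0"
        using S(1) singular P(1,2) partner s0 unfolding \<zeta>_def S0_def p_def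
        by (rule inj_on_clear_partner)
      then have "V.dim (\<zeta> ` S0) = V.dim S0"
        unfolding \<zeta>_def by (rule dim_image_inj_on[OF linear_clear_coords S0])
      moreover have "V.dim S \<le> V.dim S0 + 1"
        unfolding S0_def using S by (rule dim_le_dim_coord_zero)
      ultimately show "V.dim S \<le> V.dim (\<zeta> ` S0) + 1" by simp
    qed
  qed
qed

text \<open>The form pair_form n \<delta> P is an anisotropic line plus |P| hyperbolic pairs
  (X_i, X_2n+3-i), so its Witt index is |P|.\<close>

lemma totally_singular_dim_le_card:
  fixes S :: "(nat \<Rightarrow> 'a::field) set"
  assumes "finite P" "P \<subseteq> {2..n+1}" and irr: "irreducible [:\<delta>, 1, 1:]"
    and "V.subspace S" "finite S" "\<forall>s\<in>S. \<forall>j. j \<notin> pair_coords n P \<longrightarrow> s j = 0"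
    and "\<forall>s\<in>S. pair_form n \<delta> P s = 0"
  shows "V.dim S \<le> card P"
  using assms(1,2,4-7)
proof (induction P arbitrary: S rule: finite_induct)
  case empty
  have "s = 0" if s: "s \<in> S" for s
  proof -
    have "pair_form n \<delta> {} s = 0" using empty.prems(5) s by blast
    then have "s 1 = 0 \<and> s (2*n+2) = 0"
      by (intro irreducible_quadratic_anisotropic[OF irr]) (simp add: pair_form_def)
    moreover have "s j = 0" if "j \<notin> {1, 2*n+2}" for j
      using empty.prems(4) s that by (simp add: pair_coords_def)
    ultimately have "s j = 0" for j by (cases "j \<in> {1, 2*n+2}") auto
    then show "s = 0" by (simp add: fun_eq_iff)
  qed
  then have "S \<subseteq> V.span {}" by auto
  then show ?case using V.dim_le_card[of S "{}"] by simp
next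
  case (insert i P)
  then have "i \<in> {2..n+1}" "P \<subseteq> {2..n+1}" by auto
  with insert obtain S' where "V.subspace S'" "finite S'"
    "\<forall>s\<in>S'. \<forall>j. j \<notin> pair_coords n P \<longrightarrow> s j = 0" "\<forall>s\<in>S'. pair_form n \<delta> P s = 0"
    and dim_S: "V.dim S \<le> V.dim S' + 1"
    by (elim remove_hyperbolic_pair) blast+
  with insert.IH \<open>P \<subseteq> {2..n+1}\<close> have "V.dim S' \<le> card P" by blast
  with dim_S insert.hyps show ?case by simp
qed

lemma Q0_eq_pair_form_clear_23:
  assumes "2 \<le> n" "v (2*n) = 0" "v (2*n+1) = 0"
  shows "Qmu n \<delta> 0 v = pair_form n \<delta> {4..n+1} (clear_coords {2, 3} v)"
proof -
  have "{2..n+1} = insert 2 (insert 3 {4..n+1})" using assms(1) by auto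
  then have "(\<Sum>i=2..n+1. v i * v (2*n+3-i)) = (\<Sum>i=4..n+1. v i * v (2*n+3-i))"
    using assms by simp
  also have "\<dots> = (\<Sum>i=4..n+1. clear_coords {2, 3} v i * clear_coords {2, 3} v (2*n+3-i))"
    by (rule sum.cong) (auto simp: clear_coords_def)
  finally show ?thesis
    using assms(1) by (simp add: Qmu_def pair_form_def clear_coords_def)
qed

lemma pair_coords_clear_23: "{1..2*n+2} - {2, 3, 2*n, 2*n+1} \<subseteq> pair_coords n {4..n+1}"
proof
  fix j assume j: "j \<in> {1..2*n+2} - {2, 3, 2*n, 2*n+1}"
  show "j \<in> pair_coords n {4..n+1}"
  proof (cases "n + 2 \<le> j \<and> j \<le> 2*n - 1")
    case True
    then have "j \<in> (\<lambda>i. 2*n+3-i) ` {4..n+1}"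
      by (intro image_eqI[of _ _ "2*n+3-j"]) auto
    then show ?thesis by (simp add: pair_coords_def)
  next
    case False
    with j show ?thesis by (auto simp: pair_coords_def)
  qed
qed

locale generator_meeting_Delta =
  fixes n :: nat and \<delta> :: "'a::{finite,field}" and g :: "(nat \<Rightarrow> 'a) set"
  assumes CHAR_2: "CHAR('a) = 2" and n_ge_2: "2 \<le> n"
    and irreducible: "irreducible [:\<delta>, 1, 1:]"
    and generator: "generator n 0 g"
    and Delta_section: "is_space n (n - 1) (g \<inter> Delta n)"
begin

abbreviation D :: "(nat \<Rightarrow> 'a) set" where "D \<equiv> g \<inter> Delta n"

lemma g_ambient: "g \<subseteq> ambient n" and g_subspace: "V.subspace g" and g_dim: "V.dim g = n + 1"
  using generator unfolding generator_def is_space_def by auto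

lemma g_isotropic: "v \<in> g \<Longrightarrow> w \<in> g \<Longrightarrow> Bmu n 0 v w = 0"
  using generator unfolding generator_def by auto

lemma finite_g: "finite g"
  using g_ambient finite_ambient by (rule finite_subset)

lemma D_subspace: "V.subspace D" and D_dim: "V.dim D = n - 1"
  using Delta_section unfolding is_space_def by auto

lemma D_coords: "v \<in> D \<Longrightarrow> v (2*n) = 0 \<and> v (2*n+1) = 0"
  by (simp add: Delta_def)

lemma exists_transversal_pair:
  obtains u w where "u \<in> g" "u (2*n) = 1" "u (2*n+1) = 0" "w \<in> g" "w (2*n) = 0" "w (2*n+1) = 1"
proof -
  define g1 where "g1 = {v \<in> g. v (2*n) = 0}"
  have D_eq: "D = {v \<in> g1. v (2*n+1) = 0}" using g_ambient by (auto simp: g1_def Delta_def)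
  have g1: "V.subspace g1" "finite g1"
    using subspace_coord_zero[OF g_subspace] finite_g by (auto simp: g1_def)
  have dim_g: "V.dim g \<le> V.dim g1 + 1"
    unfolding g1_def by (rule dim_le_dim_coord_zero[OF g_subspace finite_g])
  have dim_g1: "V.dim g1 \<le> V.dim D + 1"
    unfolding D_eq by (rule dim_le_dim_coord_zero[OF g1])
  have "g1 \<noteq> g" using dim_g1 g_dim D_dim n_ge_2 by auto
  then obtain x where x: "x \<in> g" "x (2*n) \<noteq> 0" by (auto simp: g1_def)
  have "D \<noteq> g1" using dim_g g_dim D_dim n_ge_2 by auto
  then obtain y where y: "y \<in> g" "y (2*n) = 0" "y (2*n+1) \<noteq> 0" by (auto simp: D_eq g1_def)
  define w where "w = smul (1 / y (2*n+1)) y"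
  define u where "u = smul (1 / x (2*n)) x - smul (x (2*n+1) / x (2*n)) w"
  have "w \<in> g" "u \<in> g"
    using x(1) y(1) g_subspace by (simp_all add: w_def u_def V.subspace_scale V.subspace_diff)
  moreover have "w (2*n) = 0" "w (2*n+1) = 1" "u (2*n) = 1" "u (2*n+1) = 0"
    using x(2) y(2,3) by (simp_all add: w_def u_def smul_apply)
  ultimately show ?thesis using that by blast
qed

lemma Q0_add: "v \<in> g \<Longrightarrow> w \<in> g \<Longrightarrow> Qmu n \<delta> 0 (v + w) = Qmu n \<delta> 0 v + Qmu n \<delta> 0 w"
  using Qmu_add[OF CHAR_2, of n \<delta> 0 v w] g_isotropic by simp

lemma inj_on_clear_23:
  assumes "u \<in> g" "u (2*n) = 1" "u (2*n+1) = 0" "w \<in> g" "w (2*n) = 0" "w (2*n+1) = 1"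
  shows "inj_on (clear_coords {2, 3}) D"
proof -
  have "z = 0" if z: "z \<in> D" "clear_coords {2, 3} z = 0" for z
  proof -
    have z_off: "z j = 0" if "j \<noteq> 2" "j \<noteq> 3" for j
      using fun_cong[OF z(2), of j] that by (simp add: clear_coords_def)
    have B: "Bmu n 0 z v = z 2 * v (2*n+1) + z 3 * v (2*n)" for v
    proof -
      have "Bmu n 0 z v = (\<Sum>i=1..2*n+2. z i * v (2*n+3-i))" by (simp add: Bmu_def)
      also have "\<dots> = (\<Sum>i\<in>{2, 3}. z i * v (2*n+3-i))"
        by (rule sum.mono_neutral_right) (use z_off n_ge_2 in auto)
      finally show ?thesis by simp
    qed
    have "z 3 = 0" using B[of u] g_isotropic[of z u] z(1) assms by simp
    moreover have "z 2 = 0" using B[of w] g_isotropic[of z w] z(1) assms by simp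
    ultimately have "z j = 0" for j using z_off by (cases "j = 2 \<or> j = 3") auto
    then show "z = 0" by (simp add: fun_eq_iff)
  qed
  then show ?thesis
    using VP.linear_inj_on_iff_eq_0[OF linear_clear_coords D_subspace] by blast
qed

lemma exists_Q0_nonsingular_in_D: "\<exists>d0\<in>D. Qmu n \<delta> 0 d0 \<noteq> 0"
proof (rule ccontr)
  assume "\<not> ?thesis"
  then have singular: "Qmu n \<delta> 0 d = 0" if "d \<in> D" for d using that by blast
  define \<rho> :: "(nat \<Rightarrow> 'a) \<Rightarrow> nat \<Rightarrow> 'a" where "\<rho> = clear_coords {2, 3}"
  obtain u w where "u \<in> g" "u (2*n) = 1" "u (2*n+1) = 0" "w \<in> g" "w (2*n) = 0" "w (2*n+1) = 1"
    by (rule exists_transversal_pair)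
  then have "inj_on \<rho> D" unfolding \<rho>_def by (rule inj_on_clear_23)
  then have "V.dim (\<rho> ` D) = n - 1"
    unfolding \<rho>_def D_dim[symmetric] by (rule dim_image_inj_on[OF linear_clear_coords D_subspace])
  moreover have "V.dim (\<rho> ` D) \<le> card {4..n+1}"
  proof (rule totally_singular_dim_le_card[OF _ _ irreducible])
    show "V.subspace (\<rho> ` D)"
      unfolding \<rho>_def by (rule VP.linear_subspace_image[OF linear_clear_coords D_subspace])
    show "finite (\<rho> ` D)" using finite_g by simp
    show "\<forall>s\<in>\<rho> ` D. \<forall>j. j \<notin> pair_coords n {4..n+1} \<longrightarrow> s j = 0"
    proof (intro ballI allI impI)
      fix s j assume "s \<in> \<rho> ` D" and j: "j \<notin> pair_coords n {4..n+1}"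
      then obtain d where d: "d \<in> D" "s = \<rho> d" by auto
      have "j \<notin> {1..2*n+2} \<or> j \<in> {2, 3, 2*n, 2*n+1}" using j pair_coords_clear_23[of n] by blast
      then show "s j = 0"
        using d D_coords[of d] g_ambient by (auto simp: \<rho>_def clear_coords_def ambient_def)
    qed
    show "\<forall>s\<in>\<rho> ` D. pair_form n \<delta> {4..n+1} s = 0"
    proof
      fix s assume "s \<in> \<rho> ` D"
      then obtain d where d: "d \<in> D" "s = \<rho> d" by auto
      then show "pair_form n \<delta> {4..n+1} s = 0"
        using singular[OF d(1)] Q0_eq_pair_form_clear_23[OF n_ge_2, of d \<delta>] D_coords[OF d(1)]
        by (simp add: \<rho>_def)
    qed
  qed auto
  ultimately show False using n_ge_2 by simp
qed

definition K :: "(nat \<Rightarrow> 'a) set" where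
  "K = {v \<in> D. Qmu n \<delta> 0 v = 0}"

lemma K_subspace: "V.subspace K"
  unfolding V.subspace_def
proof (intro conjI ballI allI)
  show "0 \<in> K" using V.subspace_0[OF D_subspace] by (simp add: K_def)
  show "v + w \<in> K" if "v \<in> K" "w \<in> K" for v w
    using that V.subspace_add[OF D_subspace] Q0_add by (auto simp: K_def)
  show "smul c v \<in> K" if "v \<in> K" for c v
    using that V.subspace_scale[OF D_subspace] by (auto simp: K_def Qmu_smul)
qed

lemma D_decompose:
  assumes d0: "d0 \<in> D" "Qmu n \<delta> 0 d0 \<noteq> 0" and d: "d \<in> D"
  shows "\<exists>c. d - smul c d0 \<in> K"
proof -
  obtain c where c: "c^2 = Qmu n \<delta> 0 d / Qmu n \<delta> 0 d0" using CHAR_2_exists_sqrt[OF CHAR_2] by blast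
  have minus: "d - smul c d0 = d + smul c d0"
    by (simp add: fun_eq_iff minus_CHAR_2[OF CHAR_2])
  have "Qmu n \<delta> 0 (d - smul c d0) = Qmu n \<delta> 0 d + Qmu n \<delta> 0 (smul c d0)"
    unfolding minus using d d0(1) g_subspace by (intro Q0_add) (auto simp: V.subspace_scale)
  also have "\<dots> = Qmu n \<delta> 0 d + c^2 * Qmu n \<delta> 0 d0" by (simp add: Qmu_smul)
  also have "\<dots> = 0" using c d0(2) CHAR_2_add_self[OF CHAR_2] by simp
  finally have "Qmu n \<delta> 0 (d - smul c d0) = 0" .
  moreover have "d - smul c d0 \<in> D"
    using D_subspace d d0(1) by (intro V.subspace_diff V.subspace_scale)
  ultimately show ?thesis by (auto simp: K_def)
qed

end


locale cone_frame = generator_meeting_Delta +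
  fixes d0 u w :: "nat \<Rightarrow> 'a"
  assumes d0: "d0 \<in> D" "Qmu n \<delta> 0 d0 \<noteq> 0"
    and u: "u \<in> g" "u (2*n) = 1" "u (2*n+1) = 0"
    and w: "w \<in> g" "w (2*n) = 0" "w (2*n+1) = 1"
begin

lemma K_subset_g: "K \<subseteq> g"
  by (auto simp: K_def)

lemma K_vanishing: "k \<in> K \<Longrightarrow> k (2*n) = 0 \<and> k (2*n+1) = 0 \<and> Qmu n \<delta> 0 k = 0"
  by (simp add: K_def Delta_def)

lemma K_dim: "V.dim K = n - 2"
proof -
  obtain B where B: "B \<subseteq> K" "V.independent B" "K \<subseteq> V.span B" "card B = V.dim K"
    using V.basis_exists by blast
  have d0_notin: "d0 \<notin> V.span B"
    using V.span_minimal[OF B(1) K_subspace] d0(2) by (auto simp: K_def)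
  have "card (insert d0 B) = V.dim D"
  proof (rule V.basis_card_eq_dim)
    show "insert d0 B \<subseteq> D" using B(1) d0(1) by (auto simp: K_def)
    show "D \<subseteq> V.span (insert d0 B)"
    proof
      fix d assume "d \<in> D"
      then obtain c where "d - smul c d0 \<in> K" using D_decompose[OF d0] by blast
      then show "d \<in> V.span (insert d0 B)" using B(3) V.span_breakdown_eq by blast
    qed
    show "V.independent (insert d0 B)" using B(2) d0_notin by (simp add: V.independent_insert)
  qed
  moreover have "finite B" using B(1) K_subset_g finite_g by (auto intro: finite_subset)
  moreover have "d0 \<notin> B" using d0_notin V.span_base by blast
  ultimately show ?thesis using B(4) D_dim n_ge_2 by simp
qed

lemma K_space: "is_space n (n - 2) K"
  using K_subspace K_dim K_subset_g g_ambient by (auto simp: is_space_def)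

lemma frame_coords:
  "(smul c d0 + smul a u + smul b w) (2*n) = a"
  "(smul c d0 + smul a u + smul b w) (2*n+1) = b"
  using D_coords[OF d0(1)] u w by (simp_all add: smul_apply)

lemma frame_coeffs_eq_0:
  assumes p: "smul c d0 + smul a u + smul b w = p"
    and "p (2*n) = 0" "p (2*n+1) = 0" "Qmu n \<delta> 0 p = 0"
  shows "c = 0 \<and> a = 0 \<and> b = 0"
proof -
  have ab: "a = 0" "b = 0" using assms(2,3) unfolding p[symmetric] frame_coords by simp_all
  then have "p = smul c d0" using p by (auto simp: fun_eq_iff smul_apply)
  then have "c^2 * Qmu n \<delta> 0 d0 = 0" using assms(4) by (simp add: Qmu_smul)
  with d0(2) ab show ?thesis by simp
qed

definition plane :: "(nat \<Rightarrow> 'a) set" where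
  "plane = V.span {d0, u, w}"

lemma in_plane_iff: "p \<in> plane \<longleftrightarrow> (\<exists>c a b. p = smul c d0 + smul a u + smul b w)"
  unfolding plane_def by (rule in_span_3_iff)

lemma plane_subset_g: "plane \<subseteq> g"
  unfolding plane_def using d0(1) u(1) w(1) g_subspace by (intro V.span_minimal) auto

lemma plane_space: "is_space n 3 plane"
proof -
  have distinct: "d0 \<noteq> u" "d0 \<noteq> w" "u \<noteq> w"
    using D_coords[OF d0(1)] u w by auto
  have "V.independent {d0, u, w}"
  proof (rule V.independent_if_scalars_zero)
    fix f :: "(nat \<Rightarrow> 'a) \<Rightarrow> 'a" and x
    assume "(\<Sum>x\<in>{d0, u, w}. smul (f x) x) = 0" and x: "x \<in> {d0, u, w}"
    then have "smul (f d0) d0 + smul (f u) u + smul (f w) w = 0"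
      using distinct by (simp add: add.assoc)
    then have "f d0 = 0 \<and> f u = 0 \<and> f w = 0"
      by (rule frame_coeffs_eq_0) simp_all
    with x show "f x = 0" by auto
  qed simp
  then have "V.dim plane = 3"
    unfolding plane_def using distinct by (simp add: V.dim_eq_card_independent)
  then show ?thesis
    using plane_subset_g g_ambient by (auto simp: is_space_def plane_def)
qed

lemma K_inter_plane: "K \<inter> plane = {0}"
proof
  show "K \<inter> plane \<subseteq> {0}"
  proof
    fix p assume p: "p \<in> K \<inter> plane"
    then obtain c a b where comb: "p = smul c d0 + smul a u + smul b w" using in_plane_iff by blast
    then have "c = 0 \<and> a = 0 \<and> b = 0" using frame_coeffs_eq_0[OF comb[symmetric]] K_vanishing p by blast
    with comb show "p \<in> {0}" by (simp add: fun_eq_iff smul_apply)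
  qed
  show "{0} \<subseteq> K \<inter> plane"
    using V.subspace_0[OF K_subspace] V.span_zero by (auto simp: plane_def)
qed

lemma K_plus_plane_subset_g: "k \<in> K \<Longrightarrow> p \<in> plane \<Longrightarrow> k + p \<in> g"
  using K_subset_g plane_subset_g V.subspace_add[OF g_subspace] by blast

lemma g_decompose:
  assumes v: "v \<in> g" shows "\<exists>k\<in>K. \<exists>p\<in>plane. v = k + p"
proof -
  define d where "d = v - smul (v (2*n)) u - smul (v (2*n+1)) w"
  have "d \<in> g" unfolding d_def using v u(1) w(1) g_subspace
    by (intro V.subspace_diff V.subspace_scale)
  moreover have "d (2*n) = 0" "d (2*n+1) = 0" using u w by (simp_all add: d_def smul_apply)
  ultimately have "d \<in> D" using g_ambient by (auto simp: Delta_def)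
  then obtain c where c: "d - smul c d0 \<in> K" using D_decompose[OF d0] by blast
  have "smul c d0 + smul (v (2*n)) u + smul (v (2*n+1)) w \<in> plane" using in_plane_iff by blast
  moreover have "v = (d - smul c d0) + (smul c d0 + smul (v (2*n)) u + smul (v (2*n+1)) w)"
    by (simp add: d_def fun_eq_iff smul_apply)
  ultimately show ?thesis using c by blast
qed

lemma g_eq_K_plus_plane: "g = {k + p | k p. k \<in> K \<and> p \<in> plane}"
  using K_plus_plane_subset_g g_decompose by blast

lemma Qmu_K_add:
  assumes k: "k \<in> K" and p: "p \<in> g"
  shows "Qmu n \<delta> \<mu> (k + p) = Qmu n \<delta> \<mu> p"
proof -
  have "Qmu n \<delta> \<mu> k = 0" using K_vanishing[OF k] by (simp add: Qmu_eq_Q0)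
  moreover have "k \<in> g" using k K_subset_g by blast
  then have "Bmu n \<mu> k p = 0"
    using K_vanishing[OF k] g_isotropic[OF _ p] by (simp add: Bmu_eq_B0[of n \<mu>])
  ultimately show ?thesis using Qmu_add[OF CHAR_2, of n \<delta> \<mu> k p] by simp
qed

lemma singular_points_g:
  "{v \<in> g. Qmu n \<delta> \<mu> v = 0} = {k + p | k p. k \<in> K \<and> p \<in> plane \<and> Qmu n \<delta> \<mu> p = 0}"
proof (intro equalityI subsetI)
  fix v assume v: "v \<in> {v \<in> g. Qmu n \<delta> \<mu> v = 0}"
  then obtain k p where kp: "k \<in> K" "p \<in> plane" "v = k + p" using g_decompose by blast
  have "p \<in> g" using kp(2) plane_subset_g by blast
  then have "Qmu n \<delta> \<mu> p = 0" using v Qmu_K_add[OF kp(1)] kp(3) by simp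
  with kp show "v \<in> {k + p | k p. k \<in> K \<and> p \<in> plane \<and> Qmu n \<delta> \<mu> p = 0}" by blast
next
  fix v assume "v \<in> {k + p | k p. k \<in> K \<and> p \<in> plane \<and> Qmu n \<delta> \<mu> p = 0}"
  then obtain k p where kp: "k \<in> K" "p \<in> plane" "v = k + p" "Qmu n \<delta> \<mu> p = 0" by blast
  then have "v \<in> g" using K_plus_plane_subset_g by blast
  moreover have "p \<in> g" using kp(2) plane_subset_g by blast
  then have "Qmu n \<delta> \<mu> v = 0" using Qmu_K_add[OF kp(1)] kp(3,4) by simp
  ultimately show "v \<in> {v \<in> g. Qmu n \<delta> \<mu> v = 0}" by simp
qed

lemma plane_nondegenerate:
  assumes "\<mu> \<noteq> 0" "p \<in> plane" "Qmu n \<delta> \<mu> p = 0" "\<forall>p'\<in>plane. Bmu n \<mu> p p' = 0"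
  shows "p = 0"
proof -
  obtain c a b where comb: "p = smul c d0 + smul a u + smul b w" using assms(2) in_plane_iff by blast
  have p: "p \<in> g" "p (2*n) = a" "p (2*n+1) = b"
    using assms(2) plane_subset_g comb frame_coords by auto
  have "Bmu n \<mu> p u = \<mu> * b" "Bmu n \<mu> p w = \<mu> * a"
    using Bmu_eq_B0[of n \<mu> p] g_isotropic p u w by simp_all
  moreover have "u \<in> plane" "w \<in> plane" by (auto simp: plane_def intro: V.span_base)
  ultimately have "a = 0" "b = 0" using assms(1,4) by auto
  then have "c = 0 \<and> a = 0 \<and> b = 0"
    using p assms(3) Qmu_eq_Q0[of p n \<delta> \<mu>] by (intro frame_coeffs_eq_0[OF comb[symmetric]]) auto
  with comb show "p = 0" by (simp add: fun_eq_iff smul_apply)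
qed

lemma cone_over_nondeg_conic_K:
  assumes "\<mu> \<noteq> 0" shows "cone_over_nondeg_conic n \<delta> \<mu> g K"
  unfolding cone_over_nondeg_conic_def
proof (intro exI[of _ plane] conjI)
  show "\<forall>p\<in>plane. Qmu n \<delta> \<mu> p = 0 \<and> (\<forall>p'\<in>plane. Bmu n \<mu> p p' = 0) \<longrightarrow> p = 0"
    using plane_nondegenerate[OF assms] by blast
qed (fact plane_space K_subset_g plane_subset_g K_inter_plane g_eq_K_plus_plane singular_points_g)+

end

theorem mainTheorem5:
  fixes \<delta> \<mu> :: "'a::{finite, field}" and n :: nat and g :: "(nat \<Rightarrow> 'a) set"
  assumes "CHAR('a) = 2"
    and "n \<ge> 2"
    and "irreducible [:\<delta>, 1, 1:]"
    and "\<mu> \<noteq> 0"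
    and "generator n 0 g"
    and "is_space n (n - 1) (g \<inter> Delta n)"
  shows "\<exists>K. is_space n (n - 2) K \<and> cone_over_nondeg_conic n \<delta> \<mu> g K"
proof -
  interpret generator_meeting_Delta n \<delta> g
    using assms(1-3,5,6) by unfold_locales
  obtain u w where "u \<in> g" "u (2*n) = 1" "u (2*n+1) = 0" "w \<in> g" "w (2*n) = 0" "w (2*n+1) = 1"
    by (rule exists_transversal_pair)
  moreover obtain d0 where "d0 \<in> D" "Qmu n \<delta> 0 d0 \<noteq> 0"
    using exists_Q0_nonsingular_in_D by blast
  ultimately interpret cone_frame n \<delta> g d0 u w
    by unfold_locales
  show ?thesis using K_space cone_over_nondeg_conic_K[OF assms(4)] by blast
qed

end
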